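(* Let $(X,d)$ be a compact metric space without isolated points which has the property*. If $f\in\mathcal{H}(X)$ is topologically stable, then $f$ has the shadowing property and the strict periodic shadowing property; in particular $CR(f)=\overline{Per(f)}$.
   Context: $\mathcal{H}(X)$ is the set of homeomorphisms of $X$; $d_{C^0}(f,g)=\sup_{x}d(f(x),g(x))$ for continuous maps, and $D(f,g)=\max\{d_{C^0}(f,g),d_{C^0}(f^{-1},g^{-1})\}$ for homeomorphisms. $f\in\mathcal{H}(X)$ is topologically stable if for every $\epsilon>0$ there is $\delta>0$ such that for every $g\in\mathcal{H}(X)$ with $D(f,g)<\delta$ there is a continuous $h:X\to X$ with $d_{C^0}(h,\mathrm{id}_X)<\epsilon$ and $h\circ g=f\circ h$. A finite sequence $(x_i)_{i=0}^k$ ($k\ge1$) is a $\delta$-chain if $d(f(x_i),x_{i+1})\le\delta$ for $0\le i\le k-1$, and a $\delta$-cycle if moreover $x_0=x_k$. A sequence $(x_i)_{i\ge0}$ is a $\delta$-pseudo orbit if $d(f(x_i),x_{i+1})\le\delta$ for all $i\ge0$; it is $\epsilon$-shadowed by $x$ if $d(x_i,f^i(x))\le\epsilon$ for all $i\ge0$. $f$ has the shadowing property if for every $\epsilon>0$ there is $\delta>0$ such that every $\delta$-pseudo orbit is $\epsilon$-shadowed by some point. $f$ has the strict periodic shadowing property if for every $\epsilon>0$ there is $\delta>0$ such that for every $\delta$-cycle $(x_i)_{i=0}^m$ ($m\ge1$) there is $p\in X$ with $f^m(p)=p$ and $d(x_i,f^i(p))\le\epsilon$ for $0\le i\le m$.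 $Per(f)$ is the set of periodic points; $CR(f)$ is the set of chain recurrent points, i.e. $x$ such that for every $\delta>0$ there is a $\delta$-cycle $(x_i)_{i=0}^k$ with $x_0=x_k=x$. Property*: for every $\epsilon>0$ there is $\delta>0$ such that for every $n\ge1$ and all proper $n$-tuples $\zeta=(x_1,\dots,x_n),\eta=(y_1,\dots,y_n)\in X^n$ (proper meaning pairwise distinct entries) with $\max_i d(x_i,y_i)<\delta$, there is $\phi\in\mathcal{H}(X)$ with $D(\phi,\mathrm{id}_X)<\epsilon$ and $\phi(x_i)=y_i$ for all $i$. *)

theory Defs
  imports "HOL-Analysis.Analysis"
begin

definition homeos :: "'a::metric_space set \<Rightarrow> ('a \<Rightarrow> 'a) set" where
  "homeos X = {f. \<exists>g. homeomorphism X X f g}"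

definition dC0 :: "'a::metric_space set \<Rightarrow> ('a \<Rightarrow> 'a) \<Rightarrow> ('a \<Rightarrow> 'a) \<Rightarrow> real" where
  "dC0 X f g = (SUP x\<in>X. dist (f x) (g x))"

definition Dhom :: "'a::metric_space set \<Rightarrow> ('a \<Rightarrow> 'a) \<Rightarrow> ('a \<Rightarrow> 'a) \<Rightarrow> real" where
  "Dhom X f g = max (dC0 X f g) (dC0 X (inv_into X f) (inv_into X g))"

definition topologically_stable :: "'a::metric_space set \<Rightarrow> ('a \<Rightarrow> 'a) \<Rightarrow> bool" where
  "topologically_stable X f \<longleftrightarrow>
     (\<forall>\<epsilon>>0. \<exists>\<delta>>0. \<forall>g\<in>homeos X. Dhom X f g < \<delta> \<longrightarrow>
        (\<exists>h. continuous_on X h \<and> h ` X \<subseteq> X \<and> dC0 X h id < \<epsilon> \<and>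
             (\<forall>x\<in>X. h (g x) = f (h x))))"

definition shadowing :: "'a::metric_space set \<Rightarrow> ('a \<Rightarrow> 'a) \<Rightarrow> bool" where
  "shadowing X f \<longleftrightarrow>
     (\<forall>\<epsilon>>0. \<exists>\<delta>>0. \<forall>xs::nat \<Rightarrow> 'a.
        ((\<forall>i. xs i \<in> X) \<and> (\<forall>i. dist (f (xs i)) (xs (Suc i)) \<le> \<delta>)) \<longrightarrow>
        (\<exists>x\<in>X. \<forall>i. dist (xs i) ((f ^^ i) x) \<le> \<epsilon>))"

definition strict_periodic_shadowing :: "'a::metric_space set \<Rightarrow> ('a \<Rightarrow> 'a) \<Rightarrow> bool" where
  "strict_periodic_shadowing X f \<longleftrightarrow>
     (\<forall>\<epsilon>>0. \<exists>\<delta>>0. \<forall>m\<ge>1. \<forall>xs::nat \<Rightarrow> 'a.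
        ((\<forall>i\<le>m. xs i \<in> X) \<and> (\<forall>i<m. dist (f (xs i)) (xs (Suc i)) \<le> \<delta>) \<and> xs 0 = xs m) \<longrightarrow>
        (\<exists>p\<in>X. (f ^^ m) p = p \<and> (\<forall>i\<le>m. dist (xs i) ((f ^^ i) p) \<le> \<epsilon>)))"

definition Per :: "'a set \<Rightarrow> ('a \<Rightarrow> 'a) \<Rightarrow> 'a set" where
  "Per X f = {x\<in>X. \<exists>n\<ge>1. (f ^^ n) x = x}"

definition CR :: "'a::metric_space set \<Rightarrow> ('a \<Rightarrow> 'a) \<Rightarrow> 'a set" where
  "CR X f = {x\<in>X. \<forall>\<delta>>0. \<exists>k\<ge>1. \<exists>xs::nat \<Rightarrow> 'a.
      (\<forall>i\<le>k. xs i \<in> X) \<and> xs 0 = x \<and> xs k = x \<and>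
      (\<forall>i<k. dist (f (xs i)) (xs (Suc i)) \<le> \<delta>)}"

definition property_star :: "'a::metric_space set \<Rightarrow> bool" where
  "property_star X \<longleftrightarrow>
     (\<forall>\<epsilon>>0. \<exists>\<delta>>0. \<forall>n\<ge>1. \<forall>xs ys :: nat \<Rightarrow> 'a.
        ((\<forall>i<n. xs i \<in> X \<and> ys i \<in> X) \<and> inj_on xs {..<n} \<and> inj_on ys {..<n} \<and>
         (\<forall>i<n. dist (xs i) (ys i) < \<delta>)) \<longrightarrow>
        (\<exists>\<phi>\<in>homeos X. Dhom X \<phi> id < \<epsilon> \<and> (\<forall>i<n. \<phi> (xs i) = ys i)))"

end

theory Submission
  imports Defs
begin

text \<open>A finite \<open>\<delta>\<close>-chain is first moved slightly to a chain of pairwise distinct points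
  \<open>y\<^sub>0, \<dots>, y\<^sub>k\<close> (possible as X has no isolated points; a cycle stays a cycle). Property*
  yields a homeomorphism \<open>\<phi>\<close> near the identity with \<open>\<phi> (f y\<^sub>i) = y\<^sub>i\<^sub>+\<^sub>1\<close>, so the
  \<open>y\<^sub>i\<close> form a true orbit of \<open>g = \<phi> \<circ> f\<close>, a homeomorphism close to \<open>f\<close>. Topological stability
  gives \<open>h\<close> near the identity with \<open>h \<circ> g = f \<circ> h\<close>, and the \<open>f\<close>-orbit of \<open>h y\<^sub>0\<close> shadows
  the chain, periodically if the chain is a cycle. Compactness passes from finite chains to
  pseudo-orbits, and periodic shadowing of \<open>\<delta>\<close>-cycles places chain recurrent points in the
  closure of the periodic ones.\<close>

definition pseudo_chain :: "'a::metric_space set \<Rightarrow> ('a \<Rightarrow> 'a) \<Rightarrow> real \<Rightarrow> nat \<Rightarrow> (nat \<Rightarrow> 'a) \<Rightarrow> bool" where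
  "pseudo_chain X f \<delta> k xs \<longleftrightarrow>
     (\<forall>i\<le>k. xs i \<in> X) \<and> (\<forall>i<k. dist (f (xs i)) (xs (Suc i)) \<le> \<delta>)"

definition finite_periodic_shadowing :: "'a::metric_space set \<Rightarrow> ('a \<Rightarrow> 'a) \<Rightarrow> bool" where
  "finite_periodic_shadowing X f \<longleftrightarrow>
     (\<forall>\<epsilon>>0. \<exists>\<delta>>0. \<forall>k\<ge>1. \<forall>xs. pseudo_chain X f \<delta> k xs \<longrightarrow>
        (\<exists>p\<in>X. (\<forall>i\<le>k. dist (xs i) ((f ^^ i) p) \<le> \<epsilon>) \<and> (xs 0 = xs k \<longrightarrow> (f ^^ k) p = p)))"

lemma funpow_in_set:
  assumes "f ` X \<subseteq> X" "x \<in> X"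
  shows "(f ^^ i) x \<in> X"
  using assms by (induction i) auto

lemma continuous_on_funpow:
  assumes "continuous_on X f" "f ` X \<subseteq> X"
  shows "continuous_on X (f ^^ i)"
proof (induction i)
  case (Suc i)
  then show ?case
    using assms funpow_in_set[OF assms(2)]
    by (auto simp del: funpow.simps simp add: funpow_Suc_right o_def
        intro!: continuous_on_compose2[of X "f ^^ i" X f])
qed (simp add: continuous_on_id)

lemma funpow_semiconj_on:
  assumes "\<forall>x\<in>X. h (g x) = f (h x)" "g ` X \<subseteq> X" "x \<in> X"
  shows "h ((g ^^ i) x) = (f ^^ i) (h x)"
  using assms funpow_in_set[OF assms(2,3)] by (induction i) auto

lemma dist_le_dC0:
  assumes "bounded X" "x \<in> X" "f ` X \<subseteq> X" "g ` X \<subseteq> X"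
  shows "dist (f x) (g x) \<le> dC0 X f g"
proof -
  obtain a B where B: "\<forall>y\<in>X. dist a y \<le> B"
    using assms(1) bounded_def by blast
  have "dist (f y) (g y) \<le> 2 * B" if "y \<in> X" for y
  proof -
    have "dist a (f y) \<le> B" "dist a (g y) \<le> B"
      using B assms(3,4) that by auto
    then show ?thesis
      using dist_triangle3[of "f y" "g y" a] by linarith
  qed
  then have "bdd_above ((\<lambda>x. dist (f x) (g x)) ` X)"
    by (intro bdd_aboveI2)
  then show ?thesis
    unfolding dC0_def using assms(2) by (rule cSUP_upper2) simp
qed

lemma dC0_le:
  assumes "X \<noteq> {}" "\<And>x. x \<in> X \<Longrightarrow> dist (f x) (g x) \<le> e"
  shows "dC0 X f g \<le> e"
  unfolding dC0_def using assms by (intro cSUP_least) auto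

lemma homeomorphism_inv_into:
  assumes "homeomorphism X X f g" "y \<in> X"
  shows "inv_into X f y = g y"
proof (rule inv_into_f_eq)
  show "inj_on f X"
    using homeomorphism_apply1[OF assms(1)] by (rule inj_on_inverseI)
  show "g y \<in> X" "f (g y) = y"
    using assms by (auto simp: homeomorphism_def)
qed

lemma Dhom_id_less_imp_dist_less:
  assumes "homeomorphism X X \<phi> \<psi>" "bounded X" "Dhom X \<phi> id < e" "x \<in> X"
  shows "dist (\<phi> x) x < e" and "dist (\<psi> x) x < e"
proof -
  have \<phi>X: "\<phi> ` X \<subseteq> X" and \<psi>X: "inv_into X \<phi> ` X \<subseteq> X"
    using assms(1) homeomorphism_inv_into[OF assms(1)] by (auto simp: homeomorphism_def)
  show "dist (\<phi> x) x < e"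
    using dist_le_dC0[OF assms(2,4) \<phi>X, of id] assms(3) by (simp add: Dhom_def)
  have "inv_into X id x = x"
    using assms(4) by (simp add: inv_into_f_eq)
  then have "dist (inv_into X \<phi> x) x \<le> dC0 X (inv_into X \<phi>) (inv_into X id)"
    using dist_le_dC0[OF assms(2,4) \<psi>X, of "inv_into X id"] by (simp add: image_subset_iff)
  also have "\<dots> < e"
    using assms(3) by (simp add: Dhom_def)
  finally show "dist (\<psi> x) x < e"
    by (simp only: homeomorphism_inv_into[OF assms(1,4)])
qed

lemma Dhom_comp_left_less:
  assumes "compact X" "X \<noteq> {}" "homeomorphism X X f f'" "\<delta> > 0"
  obtains e where "e > 0"
    "\<And>\<phi> \<psi>. homeomorphism X X \<phi> \<psi> \<Longrightarrow> Dhom X \<phi> id < e \<Longrightarrow> Dhom X f (\<phi> \<circ> f) < \<delta>"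
proof -
  have "uniformly_continuous_on X f'"
    using assms(1,3) by (intro compact_uniformly_continuous) (auto simp: homeomorphism_def)
  moreover have "\<delta>/2 > 0"
    using assms(4) by simp
  ultimately obtain \<eta> where \<eta>: "\<eta> > 0" "\<forall>x\<in>X. \<forall>y\<in>X. dist y x < \<eta> \<longrightarrow> dist (f' y) (f' x) < \<delta>/2"
    unfolding uniformly_continuous_on_def by blast
  show thesis
  proof (rule that[of "min (\<delta>/2) \<eta>"])
    show "min (\<delta>/2) \<eta> > 0"
      using \<eta>(1) assms(4) by simp
    fix \<phi> \<psi> assume \<phi>: "homeomorphism X X \<phi> \<psi>" and small: "Dhom X \<phi> id < min (\<delta>/2) \<eta>"
    have fX: "f x \<in> X" if "x \<in> X" for x
      using assms(3) that by (auto simp: homeomorphism_def)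
    have \<psi>X: "\<psi> y \<in> X" if "y \<in> X" for y
      using \<phi> that by (auto simp: homeomorphism_def)
    have near: "dist (\<phi> x) x < min (\<delta>/2) \<eta>" "dist (\<psi> x) x < min (\<delta>/2) \<eta>" if "x \<in> X" for x
      using Dhom_id_less_imp_dist_less[OF \<phi> compact_imp_bounded[OF assms(1)] small that] by auto
    have "dC0 X f (\<phi> \<circ> f) \<le> \<delta>/2"
      using near(1)[OF fX] by (intro dC0_le[OF assms(2)]) (auto simp: dist_commute less_imp_le)
    moreover have "dC0 X (inv_into X f) (inv_into X (\<phi> \<circ> f)) \<le> \<delta>/2"
    proof (rule dC0_le[OF assms(2)])
      fix y assume y: "y \<in> X"
      have "inv_into X f y = f' y"
        using homeomorphism_inv_into[OF assms(3) y] .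
      moreover have "inv_into X (\<phi> \<circ> f) y = f' (\<psi> y)"
        using homeomorphism_inv_into[OF homeomorphism_compose[OF assms(3) \<phi>] y] by simp
      moreover have "dist (f' (\<psi> y)) (f' y) < \<delta>/2"
        using \<eta>(2) y \<psi>X[OF y] near(2)[OF y] by simp
      ultimately show "dist (inv_into X f y) (inv_into X (\<phi> \<circ> f) y) \<le> \<delta>/2"
        by (simp add: dist_commute)
    qed
    ultimately show "Dhom X f (\<phi> \<circ> f) < \<delta>"
      using assms(4) by (simp add: Dhom_def)
  qed
qed

lemma topologically_stable_perturbation_semiconj:
  assumes "compact X" "X \<noteq> {}" "homeomorphism X X f f'" "topologically_stable X f" "\<epsilon> > 0"
  obtains e where "e > 0"
    "\<And>\<phi> \<psi>. homeomorphism X X \<phi> \<psi> \<Longrightarrow> Dhom X \<phi> id < e \<Longrightarrow>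
       \<exists>h. (\<forall>x\<in>X. h x \<in> X \<and> dist (h x) x < \<epsilon>) \<and>
           (\<forall>x\<in>X. \<forall>i. h (((\<phi> \<circ> f) ^^ i) x) = (f ^^ i) (h x))"
proof -
  obtain \<delta> where "\<delta> > 0" and stable: "\<forall>g\<in>homeos X. Dhom X f g < \<delta> \<longrightarrow>
      (\<exists>h. continuous_on X h \<and> h ` X \<subseteq> X \<and> dC0 X h id < \<epsilon> \<and> (\<forall>x\<in>X. h (g x) = f (h x)))"
    using assms(4,5) unfolding topologically_stable_def by blast
  obtain e where "e > 0" and
    close: "\<And>\<phi> \<psi>. homeomorphism X X \<phi> \<psi> \<Longrightarrow> Dhom X \<phi> id < e \<Longrightarrow> Dhom X f (\<phi> \<circ> f) < \<delta>"
    using Dhom_comp_left_less[OF assms(1-3) \<open>\<delta> > 0\<close>] by blast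
  show thesis
  proof (rule that[OF \<open>e > 0\<close>])
    fix \<phi> \<psi> assume \<phi>: "homeomorphism X X \<phi> \<psi>" and small: "Dhom X \<phi> id < e"
    have g: "homeomorphism X X (\<phi> \<circ> f) (f' \<circ> \<psi>)"
      using homeomorphism_compose[OF assms(3) \<phi>] .
    then obtain h where h: "h ` X \<subseteq> X" "dC0 X h id < \<epsilon>" "\<forall>x\<in>X. h ((\<phi> \<circ> f) x) = f (h x)"
      using stable close[OF \<phi> small] unfolding homeos_def by blast
    have "dist (h x) x < \<epsilon>" if "x \<in> X" for x
      using dist_le_dC0[OF compact_imp_bounded[OF assms(1)] that h(1), of id] h(2) by simp
    moreover have "(\<phi> \<circ> f) ` X \<subseteq> X"
      using g by (simp add: homeomorphism_def)
    ultimately show "\<exists>h. (\<forall>x\<in>X. h x \<in> X \<and> dist (h x) x < \<epsilon>) \<and>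
        (\<forall>x\<in>X. \<forall>i. h (((\<phi> \<circ> f) ^^ i) x) = (f ^^ i) (h x))"
      using h(1) funpow_semiconj_on[OF h(3) \<open>(\<phi> \<circ> f) ` X \<subseteq> X\<close>] by blast
  qed
qed

lemma islimpt_perturb_inj_on:
  fixes xs :: "nat \<Rightarrow> 'a::metric_space"
  assumes "\<forall>i\<le>k. xs i \<in> X \<and> xs i islimpt X" "r > 0"
  obtains ys where "\<forall>i\<le>k. ys i \<in> X \<and> dist (xs i) (ys i) < r" "inj_on ys {..k}"
  using assms
proof (induction k arbitrary: thesis)
  case 0
  show ?case
    by (rule "0.prems"(1)[of xs]) (use "0.prems" in auto)
next
  case (Suc k)
  have "\<forall>i\<le>k. xs i \<in> X \<and> xs i islimpt X"
    using Suc.prems(2) by simp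
  then obtain ys where ys: "\<forall>i\<le>k. ys i \<in> X \<and> dist (xs i) (ys i) < r" "inj_on ys {..k}"
    using Suc.IH[OF _ _ \<open>r > 0\<close>] by blast
  have "xs (Suc k) islimpt X"
    using Suc.prems(2) by blast
  then have "infinite (X \<inter> ball (xs (Suc k)) r)"
    using \<open>r > 0\<close> islimpt_eq_infinite_ball by blast
  then have "infinite (X \<inter> ball (xs (Suc k)) r - ys ` {..k})"
    by (simp add: Diff_infinite_finite)
  then obtain w where w: "w \<in> X \<inter> ball (xs (Suc k)) r - ys ` {..k}"
    using infinite_imp_nonempty by blast
  show ?case
  proof (rule Suc.prems(1)[of "ys(Suc k := w)"])
    show "\<forall>i\<le>Suc k. (ys(Suc k := w)) i \<in> X \<and> dist (xs i) ((ys(Suc k := w)) i) < r"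
      using ys(1) w by (auto simp: le_Suc_eq)
    have "inj_on (ys(Suc k := w)) {..k}"
      using ys(2) w by (intro inj_on_fun_updI) auto
    moreover have "(ys(Suc k := w)) ` {..k} = ys ` {..k}"
      by auto
    ultimately show "inj_on (ys(Suc k := w)) {..Suc k}"
      using w by (simp add: atMost_Suc)
  qed
qed

lemma inj_on_cyclic_shift:
  assumes "inj_on zs {..k::nat}"
  shows "inj_on (\<lambda>i. (zs(k := zs 0)) (Suc i)) {..<k}"
proof -
  have "inj_on (\<lambda>i. zs (if Suc i = k then 0 else Suc i)) {..<k}"
  proof (rule inj_onI)
    fix i j assume ij: "i \<in> {..<k}" "j \<in> {..<k}"
      and "zs (if Suc i = k then 0 else Suc i) = zs (if Suc j = k then 0 else Suc j)"
    then have "(if Suc i = k then 0 else Suc i) = (if Suc j = k then 0 else Suc j)"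
      using inj_onD[OF assms] by auto
    then show "i = j"
      using ij by (auto split: if_splits)
  qed
  then show ?thesis
    by (rule inj_on_cong[THEN iffD1, rotated]) auto
qed

lemma islimpt_perturb_chain:
  fixes xs :: "nat \<Rightarrow> 'a::metric_space"
  assumes "\<forall>i\<le>k. xs i \<in> X \<and> xs i islimpt X" "r > 0"
  obtains ys where "\<forall>i\<le>k. ys i \<in> X \<and> dist (xs i) (ys i) < r"
    "inj_on ys {..<k}" "inj_on (\<lambda>i. ys (Suc i)) {..<k}" "xs 0 = xs k \<Longrightarrow> ys 0 = ys k"
proof -
  obtain zs where zs: "\<forall>i\<le>k. zs i \<in> X \<and> dist (xs i) (zs i) < r" "inj_on zs {..k}"
    using islimpt_perturb_inj_on[OF assms] by blast
  define ys where "ys = (if xs 0 = xs k then zs(k := zs 0) else zs)"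
  show thesis
  proof (rule that)
    show "\<forall>i\<le>k. ys i \<in> X \<and> dist (xs i) (ys i) < r"
      using zs(1) by (auto simp: ys_def)
    show "inj_on ys {..<k}"
      using zs(2) by (auto simp: ys_def inj_on_def)
    show "inj_on (\<lambda>i. ys (Suc i)) {..<k}"
    proof (cases "xs 0 = xs k")
      case True
      then show ?thesis
        using inj_on_cyclic_shift[OF zs(2)] by (simp add: ys_def)
    next
      case False
      have "inj_on zs (Suc ` {..<k})"
        using zs(2) by (rule inj_on_subset) auto
      then have "inj_on (zs \<circ> Suc) {..<k}"
        by (intro comp_inj_on) auto
      then show ?thesis
        using False by (simp add: ys_def o_def)
    qed
    show "ys 0 = ys k" if "xs 0 = xs k"
      using that by (simp add: ys_def)
  qed
qed

lemma pseudo_chain_perturb: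
  assumes "compact X" "\<forall>x\<in>X. x islimpt X" "continuous_on X f" "\<delta>' > 0"
  obtains \<delta> where "\<delta> > 0"
    "\<And>r k xs. r > 0 \<Longrightarrow> pseudo_chain X f \<delta> k xs \<Longrightarrow>
       \<exists>ys. (\<forall>i\<le>k. ys i \<in> X \<and> dist (xs i) (ys i) < r) \<and>
            inj_on ys {..<k} \<and> inj_on (\<lambda>i. ys (Suc i)) {..<k} \<and>
            (\<forall>i<k. dist (f (ys i)) (ys (Suc i)) < \<delta>') \<and> (xs 0 = xs k \<longrightarrow> ys 0 = ys k)"
proof -
  have "uniformly_continuous_on X f"
    using assms(3,1) by (rule compact_uniformly_continuous)
  moreover have "\<delta>'/3 > 0"
    using assms(4) by simp
  ultimately obtain \<eta> where \<eta>: "\<eta> > 0" "\<forall>x\<in>X. \<forall>y\<in>X. dist y x < \<eta> \<longrightarrow> dist (f y) (f x) < \<delta>'/3"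
    unfolding uniformly_continuous_on_def by blast
  show thesis
  proof (rule that[of "\<delta>'/3"])
    show "\<delta>'/3 > 0"
      using assms(4) by simp
    fix r :: real and k xs assume "r > 0" and chain: "pseudo_chain X f (\<delta>'/3) k xs"
    then have perturbable: "\<forall>i\<le>k. xs i \<in> X \<and> xs i islimpt X" "min r (min \<eta> (\<delta>'/3)) > 0"
      using assms(2,4) \<eta>(1) by (auto simp: pseudo_chain_def)
    obtain ys where ys: "\<forall>i\<le>k. ys i \<in> X \<and> dist (xs i) (ys i) < min r (min \<eta> (\<delta>'/3))"
      "inj_on ys {..<k}" "inj_on (\<lambda>i. ys (Suc i)) {..<k}" "xs 0 = xs k \<Longrightarrow> ys 0 = ys k"
      using islimpt_perturb_chain[OF perturbable] by blast
    have "dist (f (ys i)) (ys (Suc i)) < \<delta>'" if "i < k" for i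
    proof -
      have "ys i \<in> X" "xs i \<in> X" "dist (ys i) (xs i) < \<eta>"
        using ys(1) chain that by (auto simp: pseudo_chain_def dist_commute)
      then have "dist (f (ys i)) (f (xs i)) < \<delta>'/3"
        using \<eta>(2) by blast
      moreover have "dist (f (xs i)) (xs (Suc i)) \<le> \<delta>'/3"
        using chain that by (simp add: pseudo_chain_def)
      moreover have "dist (xs (Suc i)) (ys (Suc i)) < \<delta>'/3"
        using ys(1) that by (simp add: Suc_le_eq)
      ultimately show ?thesis
        using dist_triangle[of "f (ys i)" "ys (Suc i)" "xs (Suc i)"]
          dist_triangle[of "f (ys i)" "xs (Suc i)" "f (xs i)"] by linarith
    qed
    then show "\<exists>ys. (\<forall>i\<le>k. ys i \<in> X \<and> dist (xs i) (ys i) < r) \<and>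
        inj_on ys {..<k} \<and> inj_on (\<lambda>i. ys (Suc i)) {..<k} \<and>
        (\<forall>i<k. dist (f (ys i)) (ys (Suc i)) < \<delta>') \<and> (xs 0 = xs k \<longrightarrow> ys 0 = ys k)"
      using ys by (intro exI[of _ ys]) auto
  qed
qed

lemma property_star_orbit_realization:
  assumes "property_star X" "inj_on f X" "f ` X \<subseteq> X" "e > 0"
  obtains \<delta> where "\<delta> > 0"
    "\<And>k ys. k \<ge> 1 \<Longrightarrow> \<forall>i\<le>k. ys i \<in> X \<Longrightarrow> inj_on ys {..<k} \<Longrightarrow> inj_on (\<lambda>i. ys (Suc i)) {..<k} \<Longrightarrow>
       \<forall>i<k. dist (f (ys i)) (ys (Suc i)) < \<delta> \<Longrightarrow>
       \<exists>\<phi> \<psi>. homeomorphism X X \<phi> \<psi> \<and> Dhom X \<phi> id < e \<and> (\<forall>i\<le>k. ((\<phi> \<circ> f) ^^ i) (ys 0) = ys i)"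
proof -
  obtain \<delta> where "\<delta> > 0" and star: "\<forall>n\<ge>1. \<forall>xs ys :: nat \<Rightarrow> _.
        ((\<forall>i<n. xs i \<in> X \<and> ys i \<in> X) \<and> inj_on xs {..<n} \<and> inj_on ys {..<n} \<and>
         (\<forall>i<n. dist (xs i) (ys i) < \<delta>)) \<longrightarrow>
        (\<exists>\<phi>\<in>homeos X. Dhom X \<phi> id < e \<and> (\<forall>i<n. \<phi> (xs i) = ys i))"
    using assms(1,4) unfolding property_star_def by blast
  show thesis
  proof (rule that[OF \<open>\<delta> > 0\<close>])
    fix k ys assume k: "k \<ge> 1" and X: "\<forall>i\<le>k. ys i \<in> X"
      and inj: "inj_on ys {..<k}" "inj_on (\<lambda>i. ys (Suc i)) {..<k}"
      and close: "\<forall>i<k. dist (f (ys i)) (ys (Suc i)) < \<delta>"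
    have "inj_on f (ys ` {..<k})"
      using X by (intro inj_on_subset[OF assms(2)]) auto
    then have "inj_on (\<lambda>i. f (ys i)) {..<k}"
      using comp_inj_on[OF inj(1)] by (simp add: o_def)
    moreover have "\<forall>i<k. f (ys i) \<in> X \<and> ys (Suc i) \<in> X"
      using X assms(3) by (auto simp: Suc_le_eq)
    ultimately obtain \<phi> where "\<phi> \<in> homeos X" "Dhom X \<phi> id < e" and \<phi>: "\<forall>i<k. \<phi> (f (ys i)) = ys (Suc i)"
      using star[rule_format, OF k, of "\<lambda>i. f (ys i)" "\<lambda>i. ys (Suc i)"] inj(2) close by blast
    moreover have "((\<phi> \<circ> f) ^^ i) (ys 0) = ys i" if "i \<le> k" for i
      using that \<phi> by (induction i) auto
    ultimately show "\<exists>\<phi> \<psi>. homeomorphism X X \<phi> \<psi> \<and> Dhom X \<phi> id < e \<and> (\<forall>i\<le>k. ((\<phi> \<circ> f) ^^ i) (ys 0) = ys i)"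
      unfolding homeos_def by blast
  qed
qed

lemma topologically_stable_imp_finite_periodic_shadowing:
  assumes "compact X" "\<forall>x\<in>X. x islimpt X" "property_star X"
    and f: "homeomorphism X X f f'" and "topologically_stable X f"
  shows "finite_periodic_shadowing X f"
  unfolding finite_periodic_shadowing_def
proof (intro allI impI)
  fix \<epsilon> :: real assume "\<epsilon> > 0"
  show "\<exists>\<delta>>0. \<forall>k\<ge>1. \<forall>xs. pseudo_chain X f \<delta> k xs \<longrightarrow>
    (\<exists>p\<in>X. (\<forall>i\<le>k. dist (xs i) ((f ^^ i) p) \<le> \<epsilon>) \<and> (xs 0 = xs k \<longrightarrow> (f ^^ k) p = p))"
  proof (cases "X = {}")
    case True
    then show ?thesis
      by (intro exI[of _ 1]) (auto simp: pseudo_chain_def)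
  next
    case False
    have "inj_on f X" "f ` X \<subseteq> X" "continuous_on X f"
      using f homeomorphism_apply1[OF f] by (auto simp: homeomorphism_def intro: inj_on_inverseI)
    obtain e where "e > 0" and semiconj: "\<And>\<phi> \<psi>. homeomorphism X X \<phi> \<psi> \<Longrightarrow> Dhom X \<phi> id < e \<Longrightarrow>
        \<exists>h. (\<forall>x\<in>X. h x \<in> X \<and> dist (h x) x < \<epsilon>/2) \<and>
            (\<forall>x\<in>X. \<forall>i. h (((\<phi> \<circ> f) ^^ i) x) = (f ^^ i) (h x))"
      using topologically_stable_perturbation_semiconj[OF assms(1) False f assms(5), of "\<epsilon>/2"] \<open>\<epsilon> > 0\<close>
      by auto
    obtain \<delta>' where "\<delta>' > 0" and realize: "\<And>k ys. k \<ge> 1 \<Longrightarrow> \<forall>i\<le>k. ys i \<in> X \<Longrightarrow>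
        inj_on ys {..<k} \<Longrightarrow> inj_on (\<lambda>i. ys (Suc i)) {..<k} \<Longrightarrow>
        \<forall>i<k. dist (f (ys i)) (ys (Suc i)) < \<delta>' \<Longrightarrow>
        \<exists>\<phi> \<psi>. homeomorphism X X \<phi> \<psi> \<and> Dhom X \<phi> id < e \<and> (\<forall>i\<le>k. ((\<phi> \<circ> f) ^^ i) (ys 0) = ys i)"
      using property_star_orbit_realization[OF assms(3) \<open>inj_on f X\<close> \<open>f ` X \<subseteq> X\<close> \<open>e > 0\<close>] by blast
    obtain \<delta> where "\<delta> > 0" and perturb: "\<And>r k xs. r > 0 \<Longrightarrow> pseudo_chain X f \<delta> k xs \<Longrightarrow>
        \<exists>ys. (\<forall>i\<le>k. ys i \<in> X \<and> dist (xs i) (ys i) < r) \<and>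
             inj_on ys {..<k} \<and> inj_on (\<lambda>i. ys (Suc i)) {..<k} \<and>
             (\<forall>i<k. dist (f (ys i)) (ys (Suc i)) < \<delta>') \<and> (xs 0 = xs k \<longrightarrow> ys 0 = ys k)"
      using pseudo_chain_perturb[OF assms(1,2) \<open>continuous_on X f\<close> \<open>\<delta>' > 0\<close>] by blast
    show ?thesis
    proof (intro exI[of _ \<delta>] conjI allI impI)
      fix k xs assume k: "k \<ge> 1" and chain: "pseudo_chain X f \<delta> k xs"
      obtain ys where ys: "\<forall>i\<le>k. ys i \<in> X \<and> dist (xs i) (ys i) < \<epsilon>/2"
        "inj_on ys {..<k}" "inj_on (\<lambda>i. ys (Suc i)) {..<k}"
        "\<forall>i<k. dist (f (ys i)) (ys (Suc i)) < \<delta>'" "xs 0 = xs k \<longrightarrow> ys 0 = ys k"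
        using perturb[OF _ chain, of "\<epsilon>/2"] \<open>\<epsilon> > 0\<close> by auto
      then obtain \<phi> \<psi> where \<phi>: "homeomorphism X X \<phi> \<psi>" "Dhom X \<phi> id < e"
        and orbit: "\<forall>i\<le>k. ((\<phi> \<circ> f) ^^ i) (ys 0) = ys i"
        using realize[OF k] by blast
      obtain h where h: "\<forall>x\<in>X. h x \<in> X \<and> dist (h x) x < \<epsilon>/2"
        and conj: "\<forall>x\<in>X. \<forall>i. h (((\<phi> \<circ> f) ^^ i) x) = (f ^^ i) (h x)"
        using semiconj[OF \<phi>] by blast
      have "ys 0 \<in> X"
        using ys(1) by simp
      then have shadow: "(f ^^ i) (h (ys 0)) = h (ys i)" if "i \<le> k" for i
        using conj orbit that by metis
      show "\<exists>p\<in>X. (\<forall>i\<le>k. dist (xs i) ((f ^^ i) p) \<le> \<epsilon>) \<and> (xs 0 = xs k \<longrightarrow> (f ^^ k) p = p)"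
      proof (intro bexI[of _ "h (ys 0)"] conjI allI impI)
        show "h (ys 0) \<in> X"
          using h \<open>ys 0 \<in> X\<close> by blast
        fix i assume "i \<le> k"
        then have "dist (xs i) (ys i) < \<epsilon>/2" "dist (ys i) (h (ys i)) < \<epsilon>/2"
          using ys(1) h by (auto simp: dist_commute)
        then show "dist (xs i) ((f ^^ i) (h (ys 0))) \<le> \<epsilon>"
          unfolding shadow[OF \<open>i \<le> k\<close>] using dist_triangle[of "xs i" "h (ys i)" "ys i"] by linarith
      next
        assume "xs 0 = xs k"
        then show "(f ^^ k) (h (ys 0)) = h (ys 0)"
          using shadow[of k] ys(5) by simp
      qed
    qed (rule \<open>\<delta> > 0\<close>)
  qed
qed

lemma finite_periodic_shadowing_imp_shadowing:
  assumes "compact X" "continuous_on X f" "f ` X \<subseteq> X" "finite_periodic_shadowing X f"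
  shows "shadowing X f"
  unfolding shadowing_def
proof (intro allI impI)
  fix \<epsilon> :: real assume "\<epsilon> > 0"
  then obtain \<delta> where "\<delta> > 0" and finite: "\<forall>k\<ge>1. \<forall>xs. pseudo_chain X f \<delta> k xs \<longrightarrow>
      (\<exists>p\<in>X. (\<forall>i\<le>k. dist (xs i) ((f ^^ i) p) \<le> \<epsilon>) \<and> (xs 0 = xs k \<longrightarrow> (f ^^ k) p = p))"
    using assms(4) unfolding finite_periodic_shadowing_def by blast
  show "\<exists>\<delta>>0. \<forall>xs. (\<forall>i. xs i \<in> X) \<and> (\<forall>i. dist (f (xs i)) (xs (Suc i)) \<le> \<delta>) \<longrightarrow>
      (\<exists>x\<in>X. \<forall>i. dist (xs i) ((f ^^ i) x) \<le> \<epsilon>)"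
  proof (intro exI[of _ \<delta>] conjI allI impI)
    fix xs assume "(\<forall>i. xs i \<in> X) \<and> (\<forall>i. dist (f (xs i)) (xs (Suc i)) \<le> \<delta>)"
    then have chain: "pseudo_chain X f \<delta> (Suc N) xs" for N
      by (simp add: pseudo_chain_def)
    have "\<exists>p\<in>X. \<forall>i\<le>Suc N. dist (xs i) ((f ^^ i) p) \<le> \<epsilon>" for N
      using finite[rule_format, of "Suc N" xs] chain[of N] by auto
    then obtain P where P: "\<And>N. P N \<in> X" "\<And>N i. i \<le> Suc N \<Longrightarrow> dist (xs i) ((f ^^ i) (P N)) \<le> \<epsilon>"
      by metis
    then obtain q \<sigma> where "q \<in> X" "strict_mono \<sigma>" and lim: "(P \<circ> \<sigma>) \<longlonglongrightarrow> q"
      using assms(1) unfolding compact_def by metis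
    show "\<exists>x\<in>X. \<forall>i. dist (xs i) ((f ^^ i) x) \<le> \<epsilon>"
    proof (intro bexI[of _ q] allI)
      fix i
      have "(\<lambda>n. (f ^^ i) ((P \<circ> \<sigma>) n)) \<longlonglongrightarrow> (f ^^ i) q"
        by (rule continuous_on_tendsto_compose[OF continuous_on_funpow[OF assms(2,3)] lim \<open>q \<in> X\<close>])
          (simp add: P(1))
      moreover have "\<forall>\<^sub>F n in sequentially. dist (xs i) ((f ^^ i) ((P \<circ> \<sigma>) n)) \<le> \<epsilon>"
        unfolding eventually_sequentially
        using P(2) seq_suble[OF \<open>strict_mono \<sigma>\<close>] by (metis comp_apply le_SucI order_trans)
      ultimately show "dist (xs i) ((f ^^ i) q) \<le> \<epsilon>"
        by (rule Lim_dist_ubound[OF trivial_limit_sequentially])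
    qed (rule \<open>q \<in> X\<close>)
  qed (rule \<open>\<delta> > 0\<close>)
qed

lemma finite_periodic_shadowing_imp_strict_periodic_shadowing:
  assumes "finite_periodic_shadowing X f"
  shows "strict_periodic_shadowing X f"
  unfolding strict_periodic_shadowing_def
proof (intro allI impI)
  fix \<epsilon> :: real assume "\<epsilon> > 0"
  then obtain \<delta> where "\<delta> > 0" and finite: "\<forall>k\<ge>1. \<forall>xs. pseudo_chain X f \<delta> k xs \<longrightarrow>
      (\<exists>p\<in>X. (\<forall>i\<le>k. dist (xs i) ((f ^^ i) p) \<le> \<epsilon>) \<and> (xs 0 = xs k \<longrightarrow> (f ^^ k) p = p))"
    using assms unfolding finite_periodic_shadowing_def by blast
  show "\<exists>\<delta>>0. \<forall>m\<ge>1. \<forall>xs.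
      (\<forall>i\<le>m. xs i \<in> X) \<and> (\<forall>i<m. dist (f (xs i)) (xs (Suc i)) \<le> \<delta>) \<and> xs 0 = xs m \<longrightarrow>
      (\<exists>p\<in>X. (f ^^ m) p = p \<and> (\<forall>i\<le>m. dist (xs i) ((f ^^ i) p) \<le> \<epsilon>))"
  proof (intro exI[of _ \<delta>] conjI allI impI)
    fix m xs assume "m \<ge> 1" and cycle: "(\<forall>i\<le>m. xs i \<in> X) \<and>
      (\<forall>i<m. dist (f (xs i)) (xs (Suc i)) \<le> \<delta>) \<and> xs 0 = xs m"
    then have chain: "pseudo_chain X f \<delta> m xs"
      by (simp add: pseudo_chain_def)
    obtain p where "p \<in> X" "\<forall>i\<le>m. dist (xs i) ((f ^^ i) p) \<le> \<epsilon>" "xs 0 = xs m \<longrightarrow> (f ^^ m) p = p"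
      using finite[rule_format, OF \<open>m \<ge> 1\<close> chain] by blast
    then show "\<exists>p\<in>X. (f ^^ m) p = p \<and> (\<forall>i\<le>m. dist (xs i) ((f ^^ i) p) \<le> \<epsilon>)"
      using cycle by blast
  qed (rule \<open>\<delta> > 0\<close>)
qed

lemma strict_periodic_shadowing_imp_CR_subset:
  assumes "strict_periodic_shadowing X f"
  shows "CR X f \<subseteq> closure (Per X f)"
proof
  fix x assume x: "x \<in> CR X f"
  show "x \<in> closure (Per X f)"
    unfolding closure_approachable
  proof (intro allI impI)
    fix \<epsilon> :: real assume "\<epsilon> > 0"
    then have "\<epsilon>/2 > 0"
      by simp
    then obtain \<delta> where "\<delta> > 0" and periodic: "\<forall>m\<ge>1. \<forall>xs.
        (\<forall>i\<le>m. xs i \<in> X) \<and> (\<forall>i<m. dist (f (xs i)) (xs (Suc i)) \<le> \<delta>) \<and> xs 0 = xs m \<longrightarrow>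
        (\<exists>p\<in>X. (f ^^ m) p = p \<and> (\<forall>i\<le>m. dist (xs i) ((f ^^ i) p) \<le> \<epsilon>/2))"
      using assms unfolding strict_periodic_shadowing_def by blast
    obtain k xs where "k \<ge> 1" and cycle: "\<forall>i\<le>k. xs i \<in> X" "xs 0 = x" "xs k = x"
      "\<forall>i<k. dist (f (xs i)) (xs (Suc i)) \<le> \<delta>"
      using x \<open>\<delta> > 0\<close> unfolding CR_def by auto
    then obtain p where "p \<in> X" "(f ^^ k) p = p" "\<forall>i\<le>k. dist (xs i) ((f ^^ i) p) \<le> \<epsilon>/2"
      using periodic[rule_format, OF \<open>k \<ge> 1\<close>, of xs] by auto
    then have "p \<in> Per X f" "dist p x < \<epsilon>"
      using \<open>k \<ge> 1\<close> \<open>\<epsilon> > 0\<close> cycle(2) by (auto simp: Per_def dist_commute)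
    then show "\<exists>y\<in>Per X f. dist y x < \<epsilon>"
      by blast
  qed
qed

text \<open>A periodic orbit through a point near \<open>x\<close>, with its first and last points moved to \<open>x\<close>,
  is a cycle through \<open>x\<close>; only the two jumps at \<open>x\<close> cost anything.\<close>

lemma closure_Per_subset_CR:
  assumes "closed X" "continuous_on X f" "f ` X \<subseteq> X"
  shows "closure (Per X f) \<subseteq> CR X f"
proof
  fix x assume x: "x \<in> closure (Per X f)"
  have "Per X f \<subseteq> X"
    by (auto simp: Per_def)
  then have "x \<in> X"
    using x closure_minimal[OF _ assms(1)] by blast
  show "x \<in> CR X f"
    unfolding CR_def
  proof (intro CollectI conjI allI impI \<open>x \<in> X\<close>)
    fix \<delta> :: real assume "\<delta> > 0"
    then obtain c where "c > 0" and cont: "\<forall>y\<in>X. dist y x < c \<longrightarrow> dist (f y) (f x) < \<delta>/2"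
      using assms(2) \<open>x \<in> X\<close> unfolding continuous_on_iff by (meson half_gt_zero)
    then obtain p where "p \<in> Per X f" and px: "dist p x < min c (\<delta>/2)"
      using x \<open>\<delta> > 0\<close> unfolding closure_approachable by (meson half_gt_zero min_less_iff_conj)
    then obtain n where "n \<ge> 1" "(f ^^ n) p = p" "p \<in> X"
      by (auto simp: Per_def)
    define xs where "xs i = (if i = 0 \<or> i = n then x else (f ^^ i) p)" for i
    have near: "xs i = (f ^^ i) p \<or> xs i = x \<and> (f ^^ i) p = p" if "i \<le> n" for i
      using \<open>(f ^^ n) p = p\<close> by (auto simp: xs_def)
    have jump: "dist (f (xs i)) (xs (Suc i)) \<le> \<delta>" if "i < n" for i
    proof -
      have "dist (f (xs i)) (f ((f ^^ i) p)) < \<delta>/2"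
        using near[of i] that cont \<open>p \<in> X\<close> px \<open>\<delta> > 0\<close> by (auto simp: dist_commute)
      moreover have "dist ((f ^^ Suc i) p) (xs (Suc i)) < \<delta>/2"
        using near[of "Suc i"] that px \<open>\<delta> > 0\<close> by auto
      ultimately show ?thesis
        using dist_triangle[of "f (xs i)" "xs (Suc i)" "(f ^^ Suc i) p"] by simp
    qed
    have "xs i \<in> X" if "i \<le> n" for i
      using near[OF that] \<open>x \<in> X\<close> funpow_in_set[OF assms(3) \<open>p \<in> X\<close>] by auto
    then show "\<exists>k\<ge>1. \<exists>xs. (\<forall>i\<le>k. xs i \<in> X) \<and> xs 0 = x \<and> xs k = x \<and>
        (\<forall>i<k. dist (f (xs i)) (xs (Suc i)) \<le> \<delta>)"
      using \<open>n \<ge> 1\<close> jump by (intro exI[of _ n] conjI exI[of _ xs]) (auto simp: xs_def)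
  qed
qed

theorem theorem1p1:
  fixes X :: "'a::metric_space set" and f :: "'a \<Rightarrow> 'a"
  assumes "compact X"
    and "\<forall>x\<in>X. x islimpt X"
    and "property_star X"
    and "f \<in> homeos X"
    and "topologically_stable X f"
  shows "shadowing X f \<and> strict_periodic_shadowing X f \<and> CR X f = closure (Per X f)"
proof -
  obtain f' where f: "homeomorphism X X f f'"
    using assms(4) unfolding homeos_def by blast
  then have "continuous_on X f" "f ` X \<subseteq> X"
    by (auto simp: homeomorphism_def)
  have finite: "finite_periodic_shadowing X f"
    using topologically_stable_imp_finite_periodic_shadowing[OF assms(1-3) f assms(5)] .
  then have periodic: "strict_periodic_shadowing X f"
    by (rule finite_periodic_shadowing_imp_strict_periodic_shadowing)
  have "shadowing X f"
    using finite_periodic_shadowing_imp_shadowing[OF assms(1) \<open>continuous_on X f\<close> \<open>f ` X \<subseteq> X\<close> finite] .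
  moreover have "CR X f = closure (Per X f)"
    using strict_periodic_shadowing_imp_CR_subset[OF periodic]
      closure_Per_subset_CR[OF compact_imp_closed[OF assms(1)] \<open>continuous_on X f\<close> \<open>f ` X \<subseteq> X\<close>]
    by (rule subset_antisym)
  ultimately show ?thesis
    using periodic by blast
qed

end
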